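(* For every integer $n\ge 1$, the strong product $P_3\boxtimes R_n$ is $1$-perfectly orientable.
   Context: All graphs are finite and simple. An orientation of a graph $G$ is $1$-perfect if the out-neighborhood of every vertex induces a clique in $G$; $G$ is $1$-perfectly orientable if it admits a $1$-perfect orientation. The strong product $G\boxtimes H$ has vertex set $V(G)\times V(H)$, with distinct $(u,v),(u',v')$ adjacent iff $u'\in N_G[u]$ and $v'\in N_H[v]$ (closed neighborhoods). $P_3$ is the path on $3$ vertices. For an integer $n\ge 0$, the raft $R_n$ is the graph with vertex set $X\cup Y$, where $X=\{x_0,\dots,x_n\}$ and $Y=\{y_0,\dots,y_n\}$ are disjoint cliques, and, for $0\le i,j\le n$, $x_i$ is adjacent to $y_j$ iff $i+j\ge n+1$ (no other edges). *)

theory Defs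
  imports Main
begin

text \<open>A finite simple graph is represented by a finite vertex set V together with a
symmetric irreflexive adjacency relation E (only its restriction to V matters).\<close>

definition simple_graph :: "'a set \<Rightarrow> ('a \<Rightarrow> 'a \<Rightarrow> bool) \<Rightarrow> bool" where
  "simple_graph V E \<longleftrightarrow> finite V \<and> (\<forall>u v. E u v \<longrightarrow> E v u) \<and> (\<forall>u. \<not> E u u)"

definition orientation :: "'a set \<Rightarrow> ('a \<Rightarrow> 'a \<Rightarrow> bool) \<Rightarrow> ('a \<Rightarrow> 'a \<Rightarrow> bool) \<Rightarrow> bool" where
  "orientation V E D \<longleftrightarrow>
     (\<forall>u v. D u v \<longrightarrow> u \<in> V \<and> v \<in> V \<and> E u v) \<and>
     (\<forall>u\<in>V. \<forall>v\<in>V. E u v \<longrightarrow> (D u v \<or> D v u) \<and> \<not> (D u v \<and> D v u))"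

definition is_clique :: "'a set \<Rightarrow> ('a \<Rightarrow> 'a \<Rightarrow> bool) \<Rightarrow> 'a set \<Rightarrow> bool" where
  "is_clique V E C \<longleftrightarrow> C \<subseteq> V \<and> (\<forall>x\<in>C. \<forall>y\<in>C. x \<noteq> y \<longrightarrow> E x y)"

definition out_nbhd :: "('a \<Rightarrow> 'a \<Rightarrow> bool) \<Rightarrow> 'a \<Rightarrow> 'a set" where
  "out_nbhd D v = {w. D v w}"

definition one_perfect_orientation ::
  "'a set \<Rightarrow> ('a \<Rightarrow> 'a \<Rightarrow> bool) \<Rightarrow> ('a \<Rightarrow> 'a \<Rightarrow> bool) \<Rightarrow> bool" where
  "one_perfect_orientation V E D \<longleftrightarrow>
     orientation V E D \<and> (\<forall>v\<in>V. is_clique V E (out_nbhd D v))"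

definition one_perfectly_orientable :: "'a set \<Rightarrow> ('a \<Rightarrow> 'a \<Rightarrow> bool) \<Rightarrow> bool" where
  "one_perfectly_orientable V E \<longleftrightarrow> (\<exists>D. one_perfect_orientation V E D)"

definition strong_product_verts :: "'a set \<Rightarrow> 'b set \<Rightarrow> ('a \<times> 'b) set" where
  "strong_product_verts V1 V2 = V1 \<times> V2"

definition strong_product_adj ::
  "('a \<Rightarrow> 'a \<Rightarrow> bool) \<Rightarrow> ('b \<Rightarrow> 'b \<Rightarrow> bool) \<Rightarrow> ('a \<times> 'b) \<Rightarrow> ('a \<times> 'b) \<Rightarrow> bool" where
  "strong_product_adj E1 E2 p q \<longleftrightarrow>
     p \<noteq> q \<and> (fst q = fst p \<or> E1 (fst p) (fst q)) \<and> (snd q = snd p \<or> E2 (snd p) (snd q))"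

definition P3_verts :: "nat set" where
  "P3_verts = {0, 1, 2}"

definition P3_adj :: "nat \<Rightarrow> nat \<Rightarrow> bool" where
  "P3_adj i j \<longleftrightarrow> i + 1 = j \<or> j + 1 = i"

text \<open>The raft R_n: x_i is Inl i, y_j is Inr j, for 0 \<le> i,j \<le> n.\<close>
definition raft_verts :: "nat \<Rightarrow> (nat + nat) set" where
  "raft_verts n = Inl ` {0..n} \<union> Inr ` {0..n}"

fun raft_adj :: "nat \<Rightarrow> (nat + nat) \<Rightarrow> (nat + nat) \<Rightarrow> bool" where
  "raft_adj n (Inl i) (Inl j) = (i \<noteq> j)"
| "raft_adj n (Inr i) (Inr j) = (i \<noteq> j)"
| "raft_adj n (Inl i) (Inr j) = (i + j \<ge> n + 1)"
| "raft_adj n (Inr j) (Inl i) = (i + j \<ge> n + 1)"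

end

theory Submission
  imports Defs
begin

text \<open>A graph is 1-perfectly orientable as soon as every vertex \<open>v\<close> can be given a clique
  \<open>C v\<close> such that each edge \<open>uv\<close> satisfies \<open>v \<in> C u\<close> or \<open>u \<in> C v\<close>: orient \<open>u \<rightarrow> v\<close> when
  \<open>v \<in> C u\<close>, breaking ties by a numbering of the vertices, so that every out-neighbourhood
  lies in a clique. In \<open>P\<^sub>3 \<boxtimes> R\<^sub>n\<close> the cliques can be taken as products of an edge of \<open>P\<^sub>3\<close>
  with a raft clique \<open>{x\<^sub>i : i \<ge> k} \<union> {y\<^sub>j : j \<ge> n + 1 - k}\<close>, the choice depending on
  the layer and index of the vertex.\<close>

lemma is_clique_subset:
  assumes "is_clique V E C" and "A \<subseteq> C"
  shows "is_clique V E A"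
  using assms unfolding is_clique_def by blast

lemma one_perfectly_orientable_if_clique_cover:
  assumes graph: "simple_graph V E"
    and clique: "\<And>v. v \<in> V \<Longrightarrow> is_clique V E (C v)"
    and cover: "\<And>u v. u \<in> V \<Longrightarrow> v \<in> V \<Longrightarrow> E u v \<Longrightarrow> v \<in> C u \<or> u \<in> C v"
  shows "one_perfectly_orientable V E"
proof -
  have "finite V"
    using graph unfolding simple_graph_def by blast
  then obtain f :: "'a \<Rightarrow> nat" where inj: "inj_on f V"
    using finite_imp_inj_to_nat_seg by blast
  define D where
    "D u v \<longleftrightarrow> u \<in> V \<and> v \<in> V \<and> E u v \<and> v \<in> C u \<and> (u \<in> C v \<longrightarrow> f u < f v)" for u v
  have arcs_are_edges: "u \<in> V \<and> v \<in> V \<and> E u v" if "D u v" for u v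
    using that unfolding D_def by blast
  have one_direction: "(D u v \<or> D v u) \<and> \<not> (D u v \<and> D v u)" if "u \<in> V" "v \<in> V" "E u v" for u v
  proof -
    have "E v u" "u \<noteq> v"
      using graph \<open>E u v\<close> unfolding simple_graph_def by metis+
    then have "f u \<noteq> f v"
      using inj that(1,2) by (meson inj_on_contraD)
    then show ?thesis
      using cover[OF that] that \<open>E v u\<close> unfolding D_def by auto
  qed
  have "orientation V E D"
    unfolding orientation_def using arcs_are_edges one_direction by blast
  moreover have "is_clique V E (out_nbhd D v)" if "v \<in> V" for v
    by (rule is_clique_subset[OF clique[OF that]]) (auto simp: out_nbhd_def D_def)
  ultimately show ?thesis
    unfolding one_perfectly_orientable_def one_perfect_orientation_def by blast
qed

lemma simple_graph_strong_product:
  assumes "simple_graph V1 E1" and "simple_graph V2 E2"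
  shows "simple_graph (strong_product_verts V1 V2) (strong_product_adj E1 E2)"
  using assms unfolding simple_graph_def strong_product_verts_def strong_product_adj_def
  by (simp add: prod_eq_iff) blast

lemma is_clique_strong_product:
  assumes "is_clique V1 E1 A" and "is_clique V2 E2 B"
  shows "is_clique (strong_product_verts V1 V2) (strong_product_adj E1 E2) (A \<times> B)"
  using assms unfolding is_clique_def strong_product_verts_def strong_product_adj_def
  by auto

lemma simple_graph_P3: "simple_graph P3_verts P3_adj"
  by (auto simp: simple_graph_def P3_verts_def P3_adj_def)

lemma is_clique_P3_edges:
  "is_clique P3_verts P3_adj {0, 1}" "is_clique P3_verts P3_adj {1, 2}"
  by (auto simp: is_clique_def P3_verts_def P3_adj_def)

lemma simple_graph_raft: "simple_graph (raft_verts n) (raft_adj n)"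
proof -
  have "raft_adj n v u" if "raft_adj n u v" for u v
    using that by (cases u; cases v) auto
  moreover have "\<not> raft_adj n u u" for u
    by (cases u) auto
  moreover have "finite (raft_verts n)"
    by (simp add: raft_verts_def)
  ultimately show ?thesis
    unfolding simple_graph_def by blast
qed

definition raft_clique :: "nat \<Rightarrow> nat \<Rightarrow> (nat + nat) set" where
  "raft_clique n k = Inl ` {k..n} \<union> Inr ` {n + 1 - k..n}"

lemma is_clique_raft_clique: "is_clique (raft_verts n) (raft_adj n) (raft_clique n k)"
  unfolding is_clique_def raft_clique_def raft_verts_def by auto

text \<open>The assignment is symmetric under exchanging \<open>x\<^sub>i \<leftrightarrow> y\<^sub>i\<close> together with the layers
  \<open>0 \<leftrightarrow> 2\<close>, since \<open>raft_clique n (n + 1 - k)\<close> is the mirror image of \<open>raft_clique n k\<close>.\<close>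

fun raft_product_cover :: "nat \<Rightarrow> nat \<times> (nat + nat) \<Rightarrow> (nat \<times> (nat + nat)) set" where
  "raft_product_cover n (a, Inl i) =
     (if a = 0 then {0, 1} \<times> raft_clique n 0 else {1, 2} \<times> raft_clique n i)"
| "raft_product_cover n (a, Inr j) =
     (if a = 2 then {1, 2} \<times> raft_clique n (n + 1) else {0, 1} \<times> raft_clique n (n + 1 - j))"

lemma is_clique_raft_product_cover:
  "is_clique (strong_product_verts P3_verts (raft_verts n)) (strong_product_adj P3_adj (raft_adj n))
     (raft_product_cover n p)"
  using is_clique_strong_product[OF is_clique_P3_edges(1) is_clique_raft_clique]
    is_clique_strong_product[OF is_clique_P3_edges(2) is_clique_raft_clique]
  by (cases "(n, p)" rule: raft_product_cover.cases) simp_all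

lemma raft_product_cover_covers_edges:
  assumes "p \<in> strong_product_verts P3_verts (raft_verts n)"
    and "q \<in> strong_product_verts P3_verts (raft_verts n)"
    and "strong_product_adj P3_adj (raft_adj n) p q"
  shows "q \<in> raft_product_cover n p \<or> p \<in> raft_product_cover n q"
proof -
  obtain a v b w where pq: "p = (a, v)" "q = (b, w)"
    by (cases p; cases q)
  have "a = 0 \<or> a = 1 \<or> a = 2" "b = 0 \<or> b = 1 \<or> b = 2"
    using assms(1,2) unfolding pq strong_product_verts_def P3_verts_def by auto
  moreover obtain i j where "i \<le> n" "j \<le> n" "v = Inl i \<or> v = Inr i" "w = Inl j \<or> w = Inr j"
    using assms(1,2) unfolding pq strong_product_verts_def raft_verts_def by auto
  ultimately show ?thesis
    using assms(3) unfolding pq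
    by (elim disjE) (auto simp: strong_product_adj_def P3_adj_def raft_clique_def image_iff)
qed

text \<open>The construction also works for \<open>n = 0\<close>.\<close>

theorem proposition19:
  fixes n :: nat
  assumes "n \<ge> 1"
  shows "one_perfectly_orientable
           (strong_product_verts P3_verts (raft_verts n))
           (strong_product_adj P3_adj (raft_adj n))"
  using one_perfectly_orientable_if_clique_cover
    [OF simple_graph_strong_product[OF simple_graph_P3 simple_graph_raft]
      is_clique_raft_product_cover raft_product_cover_covers_edges] .

end
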